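(* Let $N\ge 2$, $p\ge 2$, $0<r_0<R_0\le\infty$, $\Omega=B]r_0,R_0[$, and let $V\in C(\Omega)$ with $V\ge 0$. Assume condition $( * )$ holds. Let $u$ be a positive radial strictly monotone decreasing $C^2$-subsolution of $-\Delta_p w-V|w|^{p-2}w=0$ in $\Omega$, and assume there exists a positive radial strictly monotone decreasing $C^2$-supersolution $v$ of this equation such that $u$ is monotonically smaller than $v$. Then for every positive (not necessarily radial or decreasing) $C^2$-supersolution $w$ of the equation there exists $C>0$ such that $u(x)\le C\,w(x)$ for all $x\in B[r_0,R_0[$.
   Context: $\Delta_p w=\nabla\cdot(|\nabla w|^{p-2}\nabla w)$. $B]r_0,R_0[=\{x\in\mathbb{R}^N: r_0<|x|<R_0\}$, $B[r_0,R_0[=\{x: r_0\le|x|<R_0\}$. A $C^2$-subsolution (resp. supersolution) in $\Omega$ is $w\in C^2(B[r_0,R_0[)$ with $-\Delta_p w-V|w|^{p-2}w\le 0$ (resp. $\ge0$) pointwise in $\Omega$. Radial functions $w(x)=\phi(|x|)$ are identified with $\phi$, $w'=\phi'$; strictly monotone decreasing means $w'(r)<0$ for all $r\in[r_0,R_0[$. For positive radial $C^1$ functions $u,v$ on $B[r_0,R_0[$: $u$ is smaller than $v$ if $u(r)=o(v(r))$ as $r\to R_0$; $u$ is monotonically smaller than $v$ if it is smaller than $v$ and there is $r_1\in[r_0,R_0[$ such that $u/v$ is monotone non-increasing on $[r_1,R_0[$. Condition $( * )$: there exists $\varphi\in C^2(\Omega)$, $\varphi>0$, with $-\Delta_p\varphi-V\varphi^{p-1}\ge0$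 in $\Omega$ and not identically zero. *)

theory Defs
  imports "HOL-Analysis.Analysis" "HOL-Library.Landau_Symbols"
begin

definition grad :: "('a::euclidean_space \<Rightarrow> real) \<Rightarrow> 'a \<Rightarrow> 'a" where
  "grad f x = (\<Sum>b\<in>Basis. frechet_derivative f (at x) b *\<^sub>R b)"

definition divg :: "('a::euclidean_space \<Rightarrow> 'a) \<Rightarrow> 'a \<Rightarrow> real" where
  "divg F x = (\<Sum>b\<in>Basis. frechet_derivative F (at x) b \<bullet> b)"

definition ppow_vec :: "real \<Rightarrow> 'a::euclidean_space \<Rightarrow> 'a" where
  "ppow_vec p y = (if y = 0 then 0 else norm y powr (p - 2) *\<^sub>R y)"

definition ppow :: "real \<Rightarrow> real \<Rightarrow> real" where
  "ppow p t = (if t = 0 then 0 else \<bar>t\<bar> powr (p - 2) * t)"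

definition plap :: "real \<Rightarrow> ('a::euclidean_space \<Rightarrow> real) \<Rightarrow> 'a \<Rightarrow> real" where
  "plap p w x = divg (\<lambda>y. ppow_vec p (grad w y)) x"

definition C2_open :: "'a::euclidean_space set \<Rightarrow> ('a \<Rightarrow> real) \<Rightarrow> bool" where
  "C2_open U f \<longleftrightarrow> open U \<and> (\<forall>x\<in>U. f differentiable (at x))
     \<and> (\<forall>x\<in>U. grad f differentiable (at x))
     \<and> (\<forall>b\<in>Basis. continuous_on U (\<lambda>x. frechet_derivative (grad f) (at x) b))"

definition C2_on :: "'a::euclidean_space set \<Rightarrow> ('a \<Rightarrow> real) \<Rightarrow> bool" where
  "C2_on S f \<longleftrightarrow> (\<exists>U. S \<subseteq> U \<and> C2_open U f)"

definition annulus_open :: "real \<Rightarrow> ereal \<Rightarrow> 'a::euclidean_space set" where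
  "annulus_open r0 R0 = {x. r0 < norm x \<and> ereal (norm x) < R0}"

definition annulus_co :: "real \<Rightarrow> ereal \<Rightarrow> 'a::euclidean_space set" where
  "annulus_co r0 R0 = {x. r0 \<le> norm x \<and> ereal (norm x) < R0}"

definition radii :: "real \<Rightarrow> ereal \<Rightarrow> real set" where
  "radii r0 R0 = {r. r0 \<le> r \<and> ereal r < R0}"

definition to_R0 :: "ereal \<Rightarrow> real filter" where
  "to_R0 R0 = (if R0 = \<infinity> then at_top else at_left (real_of_ereal R0))"

definition subsol :: "real \<Rightarrow> real \<Rightarrow> ereal \<Rightarrow> ('a::euclidean_space \<Rightarrow> real) \<Rightarrow> ('a \<Rightarrow> real) \<Rightarrow> bool" where
  "subsol p r0 R0 V w \<longleftrightarrow> C2_on (annulus_co r0 R0) w \<and>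
     (\<forall>x\<in>annulus_open r0 R0. - plap p w x - V x * ppow p (w x) \<le> 0)"

definition supersol :: "real \<Rightarrow> real \<Rightarrow> ereal \<Rightarrow> ('a::euclidean_space \<Rightarrow> real) \<Rightarrow> ('a \<Rightarrow> real) \<Rightarrow> bool" where
  "supersol p r0 R0 V w \<longleftrightarrow> C2_on (annulus_co r0 R0) w \<and>
     (\<forall>x\<in>annulus_open r0 R0. - plap p w x - V x * ppow p (w x) \<ge> 0)"

definition radial_sdec :: "real \<Rightarrow> ereal \<Rightarrow> ('a::euclidean_space \<Rightarrow> real) \<Rightarrow> (real \<Rightarrow> real) \<Rightarrow> bool" where
  "radial_sdec r0 R0 w \<phi> \<longleftrightarrow> (\<forall>x\<in>annulus_co r0 R0. w x = \<phi> (norm x)) \<and>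
     (\<forall>r\<in>radii r0 R0. \<exists>d<0. (\<phi> has_real_derivative d) (at r within radii r0 R0))"

definition mono_smaller :: "real \<Rightarrow> ereal \<Rightarrow> (real \<Rightarrow> real) \<Rightarrow> (real \<Rightarrow> real) \<Rightarrow> bool" where
  "mono_smaller r0 R0 \<phi>u \<phi>v \<longleftrightarrow> \<phi>u \<in> o[to_R0 R0](\<phi>v) \<and>
     (\<exists>r1\<in>radii r0 R0. \<forall>s\<in>radii r0 R0. \<forall>t\<in>radii r0 R0.
        r1 \<le> s \<and> s \<le> t \<longrightarrow> \<phi>u t / \<phi>v t \<le> \<phi>u s / \<phi>v s)"

definition cond_star :: "real \<Rightarrow> real \<Rightarrow> ereal \<Rightarrow> ('a::euclidean_space \<Rightarrow> real) \<Rightarrow> bool" where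
  "cond_star p r0 R0 V \<longleftrightarrow> (\<exists>\<phi>. C2_open (annulus_open r0 R0) \<phi> \<and>
     (\<forall>x\<in>annulus_open r0 R0. \<phi> x > 0) \<and>
     (\<forall>x\<in>annulus_open r0 R0. - plap p \<phi> x - V x * \<phi> x powr (p - 1) \<ge> 0) \<and>
     (\<exists>x\<in>annulus_open r0 R0. - plap p \<phi> x - V x * \<phi> x powr (p - 1) \<noteq> 0))"

end

theory Submission
  imports Defs
begin

text \<open>
  Fix \<open>\<epsilon> > 0\<close> and put \<open>f = u - \<epsilon> v\<close>. Since \<open>u = o(v)\<close>, \<open>f < 0\<close> on some sphere
  \<open>|x| = \<rho>\<close> far out, while on the sphere \<open>|x| = r\<^sub>1\<close> beyond which \<open>u/v\<close> is nonincreasing,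
  compactness gives \<open>u \<le> C w\<close>. On the shell between the two spheres consider
  \<open>F = f + \<delta> + \<eta> f\<^sup>2\<close> with small \<open>\<delta>, \<eta> > 0\<close>. Wherever \<open>f > 0\<close>, \<open>F\<close> is a strict subsolution:
  since \<open>u/v\<close> is nonincreasing, \<open>f\<close> decreases radially, so the radial forms of the inequalities
  for \<open>u\<close> and \<open>\<epsilon> v\<close> combine through the subadditivity of the convex, positively homogeneous
  function \<open>(Y, a) \<mapsto> Y\<^bsup>p-1\<^esup> a\<^bsup>2-p\<^esup>\<close>, and the quadratic term makes the inequality strict.
  If \<open>F/w\<close> exceeded \<open>2C\<close> somewhere on the shell, at a maximum point \<open>F\<close> would touch a multiple
  of the supersolution \<open>w\<close> from below, and comparing second derivatives there contradicts
  strictness. Hence \<open>u - \<epsilon> v \<le> 2C w\<close> for every \<open>\<epsilon>\<close>, so \<open>u \<le> 2C w\<close>.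
\<close>

section \<open>Elementary inequalities\<close>

lemma powr_minus_two_mult_self:
  fixes x p :: real
  assumes "0 \<le> x"
  shows "x powr (p - 2) * x = x powr (p - 1)"
proof -
  have "x * x powr (p - 2) = x powr (1 + (p - 2))" using assms by (rule powr_mult_base)
  then show ?thesis by (simp add: mult.commute)
qed

lemma ppow_pos: "0 < t \<Longrightarrow> ppow p t = t powr (p - 1)"
  by (simp add: ppow_def powr_minus_two_mult_self)

lemma mult_powr_divide:
  fixes a y q :: real
  assumes "0 < a" "0 < y"
  shows "a * (y / a) powr q = y powr q * a powr (1 - q)"
proof -
  have "a powr (1 - q) = a / a powr q" using assms by (simp add: powr_diff)
  then show ?thesis using assms by (simp add: powr_divide)
qed

lemma powr_perspective_subadditive:
  fixes q y1 y2 a1 a2 :: real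
  assumes q: "1 \<le> q" and pos: "0 < y1" "0 < y2" "0 < a1" "0 < a2"
  shows "(y1 + y2) powr q * (a1 + a2) powr (1 - q)
           \<le> y1 powr q * a1 powr (1 - q) + y2 powr q * a2 powr (1 - q)"
proof -
  define \<tau> where "\<tau> = a2 / (a1 + a2)"
  have \<tau>: "0 \<le> \<tau>" "\<tau> \<le> 1" using pos by (auto simp: \<tau>_def)
  have "(1 - \<tau>) * (y1 / a1) = y1 / (a1 + a2)" "\<tau> * (y2 / a2) = y2 / (a1 + a2)"
    using pos by (simp_all add: \<tau>_def field_simps)
  then have comb: "(1 - \<tau>) *\<^sub>R (y1 / a1) + \<tau> *\<^sub>R (y2 / a2) = (y1 + y2) / (a1 + a2)"
    by (simp add: add_divide_distrib)
  have w1: "(a1 + a2) * (1 - \<tau>) = a1" and w2: "(a1 + a2) * \<tau> = a2"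
    using pos by (simp_all add: \<tau>_def field_simps)
  have "((y1 + y2) / (a1 + a2)) powr q \<le> (1 - \<tau>) * (y1 / a1) powr q + \<tau> * (y2 / a2) powr q"
    using convex_onD[OF powr_convex[OF q] \<tau>, of "y1 / a1" "y2 / a2"] pos comb by simp
  then have "(a1 + a2) * ((y1 + y2) / (a1 + a2)) powr q
      \<le> (a1 + a2) * ((1 - \<tau>) * (y1 / a1) powr q + \<tau> * (y2 / a2) powr q)"
    using pos by (intro mult_left_mono) auto
  also have "\<dots> = a1 * (y1 / a1) powr q + a2 * (y2 / a2) powr q"
    by (simp only: distrib_left mult.assoc[symmetric] w1 w2)
  finally show ?thesis using pos by (simp add: mult_powr_divide)
qed

text \<open>
  Read \<open>a\<close>, \<open>b\<close> as minus the radial derivatives of \<open>u\<close>, \<open>v\<close> at a point and \<open>Lu\<close>, \<open>Lv\<close> as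
  their \<open>plap_factor\<close> terms: then the conclusion is the subsolution inequality for \<open>u - \<epsilon> v\<close>.
\<close>
lemma radial_difference_subsolution_ineq:
  fixes p V \<epsilon> a b ux vx Lu Lv :: real
  assumes p: "2 \<le> p" and V: "0 \<le> V" and \<epsilon>: "0 < \<epsilon>"
    and pos: "0 < b" "0 < ux" "0 < vx" and f: "\<epsilon> * vx < ux" and s: "\<epsilon> * b < a"
    and sub: "- V * ux powr (p - 1) \<le> Lu * a powr (p - 2)"
    and super: "Lv * b powr (p - 2) \<le> - V * vx powr (p - 1)"
  shows "- V * (ux - \<epsilon> * vx) powr (p - 1) \<le> (Lu - \<epsilon> * Lv) * (a - \<epsilon> * b) powr (p - 2)"
proof -
  have a: "0 < a" using s \<epsilon> pos(1) by (meson less_trans mult_pos_pos)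
  have cancel: "y powr (p - 2) * y powr (2 - p) = 1" if "0 < y" for y :: real
    using that by (simp add: powr_add[symmetric])
  have Lu: "- V * ux powr (p - 1) * a powr (2 - p) \<le> Lu"
    using mult_right_mono[OF sub, of "a powr (2 - p)"] cancel[OF a] by (simp add: mult.assoc)
  have "Lv \<le> - V * vx powr (p - 1) * b powr (2 - p)"
    using mult_right_mono[OF super, of "b powr (2 - p)"] cancel[OF pos(1)] by (simp add: mult.assoc)
  then have "\<epsilon> * Lv \<le> \<epsilon> * (- V * vx powr (p - 1) * b powr (2 - p))"
    using \<epsilon> by (intro mult_left_mono) auto
  moreover have "(\<epsilon> * vx) powr (p - 1) * (\<epsilon> * b) powr (2 - p)
      = \<epsilon> * (vx powr (p - 1) * b powr (2 - p))"
    using \<epsilon> by (simp add: powr_mult powr_add[symmetric] algebra_simps)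
  ultimately have Lv: "\<epsilon> * Lv \<le> - V * (\<epsilon> * vx) powr (p - 1) * (\<epsilon> * b) powr (2 - p)"
    by (simp add: algebra_simps)
  have "ux powr (p - 1) * a powr (2 - p)
      \<le> (ux - \<epsilon> * vx) powr (p - 1) * (a - \<epsilon> * b) powr (2 - p)
        + (\<epsilon> * vx) powr (p - 1) * (\<epsilon> * b) powr (2 - p)"
    using powr_perspective_subadditive[of "p - 1" "ux - \<epsilon> * vx" "\<epsilon> * vx" "a - \<epsilon> * b" "\<epsilon> * b"]
      p \<epsilon> pos f s by simp
  then have "V * (ux powr (p - 1) * a powr (2 - p))
      \<le> V * ((ux - \<epsilon> * vx) powr (p - 1) * (a - \<epsilon> * b) powr (2 - p))
        + V * ((\<epsilon> * vx) powr (p - 1) * (\<epsilon> * b) powr (2 - p))"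
    using V by (simp add: mult_left_mono flip: distrib_left)
  then have "- V * (ux - \<epsilon> * vx) powr (p - 1) * (a - \<epsilon> * b) powr (2 - p) \<le> Lu - \<epsilon> * Lv"
    using Lu Lv by (simp only: mult_minus_left mult.assoc)
  from mult_right_mono[OF this, of "(a - \<epsilon> * b) powr (p - 2)"] show ?thesis
    using cancel[of "a - \<epsilon> * b"] s by (simp add: algebra_simps)
qed

lemma quadratic_perturbation_strict_ineq:
  fixes p V \<eta> \<delta> f s L :: real
  assumes p: "2 \<le> p" and V: "0 \<le> V" and \<eta>: "0 < \<eta>" and f: "0 < f" and s: "0 < s"
    and \<delta>: "\<eta> * f\<^sup>2 \<le> \<delta>" and L: "- V * f powr (p - 1) \<le> L * s powr (p - 2)"
  shows "- V * (f + \<delta> + \<eta> * f\<^sup>2) powr (p - 1)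
           < ((1 + 2 * \<eta> * f) * s) powr (p - 2) * ((1 + 2 * \<eta> * f) * L + (p - 1) * 2 * \<eta> * s\<^sup>2)"
proof -
  define g where "g = 1 + 2 * \<eta> * f"
  have g: "0 < g" using \<eta> f by (simp add: g_def add_pos_pos)
  have "g * f \<le> f + \<delta> + \<eta> * f\<^sup>2" using \<delta> by (simp add: g_def power2_eq_square algebra_simps)
  then have "- V * (f + \<delta> + \<eta> * f\<^sup>2) powr (p - 1) \<le> - V * (g * f) powr (p - 1)"
    using p V g f by (simp add: mult_left_mono powr_mono2)
  also have "\<dots> = g powr (p - 1) * (- V * f powr (p - 1))" by (simp add: powr_mult)
  also have "\<dots> \<le> g powr (p - 1) * (L * s powr (p - 2))" using L by (intro mult_left_mono) auto
  also have "\<dots> = (g * s) powr (p - 2) * (g * L)"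
    using powr_minus_two_mult_self[of g p] g by (simp add: powr_mult algebra_simps)
  also have "\<dots> < (g * s) powr (p - 2) * (g * L + (p - 1) * 2 * \<eta> * s\<^sup>2)"
    using g s \<eta> p by (intro mult_strict_left_mono) auto
  finally show ?thesis by (simp add: g_def)
qed

section \<open>Gradient and \<open>p\<close>-Laplacian\<close>

lemma has_derivative_grad:
  fixes f :: "'a::euclidean_space \<Rightarrow> real"
  assumes "f differentiable (at x)"
  shows "(f has_derivative (\<lambda>h. grad f x \<bullet> h)) (at x)"
proof -
  obtain f' where f': "(f has_derivative f') (at x)"
    using assms by (auto simp: differentiable_def)
  interpret f': bounded_linear f' using f' by (rule has_derivative_bounded_linear)
  have "grad f x \<bullet> h = f' h" for h
  proof -
    have "grad f x \<bullet> h = (\<Sum>b\<in>Basis. f' b * (b \<bullet> h))"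
      by (simp add: grad_def frechet_derivative_at[OF f', symmetric] inner_sum_left)
    also have "\<dots> = f' (\<Sum>b\<in>Basis. (h \<bullet> b) *\<^sub>R b)"
      by (simp add: f'.sum f'.scale inner_commute mult.commute)
    finally show ?thesis by (simp add: euclidean_representation)
  qed
  with f' show ?thesis by (simp add: fun_eq_iff)
qed

lemma grad_eqI:
  fixes f :: "'a::euclidean_space \<Rightarrow> real"
  assumes "(f has_derivative (\<lambda>h. g \<bullet> h)) (at x)"
  shows "grad f x = g"
  by (simp add: grad_def frechet_derivative_at[OF assms, symmetric] euclidean_representation)

lemma sum_Basis_inner_linear:
  fixes H :: "'a::euclidean_space \<Rightarrow> 'a"
  assumes "linear H"
  shows "(\<Sum>b\<in>Basis. (y \<bullet> H b) * (y \<bullet> b)) = y \<bullet> H y"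
proof -
  have "y \<bullet> H y = y \<bullet> H (\<Sum>b\<in>Basis. (y \<bullet> b) *\<^sub>R b)" by (simp add: euclidean_representation)
  also have "\<dots> = (\<Sum>b\<in>Basis. (y \<bullet> b) * (y \<bullet> H b))"
    by (simp add: linear_sum[OF assms] linear_cmul[OF assms] inner_sum_right)
  finally show ?thesis by (simp add: mult.commute)
qed

text \<open>
  The bracket in \<open>\<Delta>\<^sub>p f = |g|\<^bsup>p-2\<^esup> (tr H + (p - 2) \<langle>g, H g\<rangle> / |g|\<^sup>2)\<close>,
  where \<open>g\<close> and \<open>H\<close> are the gradient and the Hessian of \<open>f\<close>.
\<close>
definition plap_factor :: "real \<Rightarrow> ('a::euclidean_space \<Rightarrow> 'a) \<Rightarrow> 'a \<Rightarrow> real" where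
  "plap_factor p H g = (\<Sum>b\<in>Basis. H b \<bullet> b) + (p - 2) * (g \<bullet> H g) / (norm g)\<^sup>2"

lemma plap_eq_plap_factor:
  fixes f :: "'a::euclidean_space \<Rightarrow> real"
  assumes H: "(grad f has_derivative H) (at x)" and nz: "grad f x \<noteq> 0"
  shows "plap p f x = norm (grad f x) powr (p - 2) * plap_factor p H (grad f x)"
proof -
  define G where "G = grad f"
  define q where "q = p - 2"
  define n where "n = norm (G x)"
  have G: "(G has_derivative H) (at x)" and nz: "G x \<noteq> 0" using H nz by (simp_all add: G_def)
  have n: "0 < n" using nz by (simp add: n_def)
  have dn: "((\<lambda>y. norm (G y)) has_derivative (\<lambda>k. H k \<bullet> sgn (G x))) (at x)"
    using has_derivative_compose[OF G has_derivative_norm[OF nz]] by simp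
  have "((\<lambda>z. z powr q) has_real_derivative q * n powr (q - 1)) (at (norm (G x)))"
    using has_real_derivative_powr[OF n, of q] by (simp add: n_def)
  from DERIV_compose_FDERIV[OF this dn]
  have dp: "((\<lambda>y. norm (G y) powr q) has_derivative
      (\<lambda>k. (H k \<bullet> sgn (G x)) * (q * n powr (q - 1)))) (at x)" by simp
  define H' where "H' = (\<lambda>k. n powr q *\<^sub>R H k + ((H k \<bullet> sgn (G x)) * (q * n powr (q - 1))) *\<^sub>R G x)"
  have dpsi: "((\<lambda>y. norm (G y) powr q *\<^sub>R G y) has_derivative H') (at x)"
    using has_derivative_scaleR[OF dp G] by (simp add: n_def H'_def)
  obtain d where d: "0 < d" "\<And>y. dist x y < d \<Longrightarrow> G y \<noteq> 0"
    using continuous_at_avoid[OF has_derivative_continuous[OF G] nz] by auto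
  have "((\<lambda>y. ppow_vec p (G y)) has_derivative H') (at x)"
    by (rule has_derivative_transform_within[OF dpsi d(1)])
       (use d(2) in \<open>auto simp: ppow_vec_def q_def dist_commute\<close>)
  then have "plap p f x = (\<Sum>b\<in>Basis. H' b \<bullet> b)"
    by (simp add: plap_def divg_def G_def frechet_derivative_at[symmetric])
  also have "\<dots> = n powr q * (\<Sum>b\<in>Basis. H b \<bullet> b)
      + q * n powr (q - 1) / n * (\<Sum>b\<in>Basis. (G x \<bullet> H b) * (G x \<bullet> b))"
    by (simp add: H'_def inner_add_left sum.distrib sum_distrib_left sum_divide_distrib
        sgn_div_norm n_def inner_commute algebra_simps) (simp add: divide_inverse algebra_simps)
  also have "(\<Sum>b\<in>Basis. (G x \<bullet> H b) * (G x \<bullet> b)) = G x \<bullet> H (G x)"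
    using G has_derivative_linear by (blast intro: sum_Basis_inner_linear)
  also have "q * n powr (q - 1) / n = n powr q * q / n\<^sup>2"
    using n by (simp add: powr_diff power2_eq_square)
  finally show ?thesis by (simp add: plap_factor_def G_def n_def q_def algebra_simps)
qed

lemma plap_factor_scaleR:
  assumes H: "linear H" and c: "c \<noteq> 0"
  shows "plap_factor p H (c *\<^sub>R g) = plap_factor p H g"
proof -
  have "(c *\<^sub>R g) \<bullet> H (c *\<^sub>R g) = c\<^sup>2 * (g \<bullet> H g)"
    by (simp add: linear_cmul[OF H] power2_eq_square)
  moreover have "(norm (c *\<^sub>R g))\<^sup>2 = c\<^sup>2 * (norm g)\<^sup>2" by (simp add: power_mult_distrib)
  ultimately show ?thesis
    using c
    by (simp add: plap_factor_def mult.left_commute[of "p - 2"] mult_divide_mult_cancel_left)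
qed

lemma plap_factor_unit: "norm e = 1 \<Longrightarrow> plap_factor p H e = (\<Sum>b\<in>Basis. H b \<bullet> b) + (p - 2) * (e \<bullet> H e)"
  by (simp add: plap_factor_def)

lemma plap_factor_diff_scaled:
  "plap_factor p (\<lambda>k. Hu k - \<epsilon> *\<^sub>R Hv k) g = plap_factor p Hu g - \<epsilon> * plap_factor p Hv g"
proof -
  have "(\<Sum>b\<in>Basis. (Hu b - \<epsilon> *\<^sub>R Hv b) \<bullet> b) = (\<Sum>b\<in>Basis. Hu b \<bullet> b) - \<epsilon> * (\<Sum>b\<in>Basis. Hv b \<bullet> b)"
    by (simp add: inner_diff_left sum_subtractf sum_distrib_left)
  moreover have "(p - 2) * (g \<bullet> (Hu g - \<epsilon> *\<^sub>R Hv g)) / (norm g)\<^sup>2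
      = (p - 2) * (g \<bullet> Hu g) / (norm g)\<^sup>2 - \<epsilon> * ((p - 2) * (g \<bullet> Hv g) / (norm g)\<^sup>2)"
    by (simp add: inner_diff_right right_diff_distrib diff_divide_distrib mult.left_commute)
  ultimately show ?thesis unfolding plap_factor_def by (simp only: distrib_left)
qed

lemma plap_factor_mono:
  assumes hess: "\<And>h. HF h \<bullet> h \<le> c * (HW h \<bullet> h)" and p: "2 \<le> p"
  shows "plap_factor p HF g \<le> c * plap_factor p HW g"
proof -
  have "(\<Sum>b\<in>Basis. HF b \<bullet> b) \<le> c * (\<Sum>b\<in>Basis. HW b \<bullet> b)"
    by (simp add: sum_distrib_left sum_mono hess)
  moreover have "(p - 2) * (g \<bullet> HF g) / (norm g)\<^sup>2 \<le> (p - 2) * (c * (g \<bullet> HW g)) / (norm g)\<^sup>2"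
    using hess[of g] p by (intro divide_right_mono mult_left_mono) (auto simp: inner_commute)
  ultimately show ?thesis by (simp add: plap_factor_def algebra_simps)
qed

lemma plap_eq_plap_factor_direction:
  fixes f :: "'a::euclidean_space \<Rightarrow> real"
  assumes H: "(grad f has_derivative H) (at x)" and gf: "grad f x = c *\<^sub>R e"
    and c: "c \<noteq> 0" and e: "norm e = 1"
  shows "plap p f x = \<bar>c\<bar> powr (p - 2) * plap_factor p H e"
proof -
  have "grad f x \<noteq> 0" using gf c e by auto
  with plap_eq_plap_factor[OF H] show ?thesis
    using plap_factor_scaleR[OF has_derivative_linear[OF H] c] gf e by simp
qed

section \<open>Touching from below and a comparison principle on shells\<close>

lemma second_derivative_nonneg_at_local_min:
  fixes k k' :: "real \<Rightarrow> real"
  assumes d: "0 < d" and min: "\<And>t. \<bar>t\<bar> < d \<Longrightarrow> k 0 \<le> k t"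
    and dk: "\<And>t. \<bar>t\<bar> < d \<Longrightarrow> (k has_real_derivative k' t) (at t)"
    and k'0: "k' 0 = 0" and dk': "(k' has_real_derivative c) (at 0)"
  shows "0 \<le> c"
proof (rule ccontr)
  assume "\<not> 0 \<le> c"
  have "((\<lambda>h. k' h / h) \<longlongrightarrow> c) (at_right 0)"
    using dk' k'0 by (simp add: DERIV_def filterlim_at_split)
  then have "eventually (\<lambda>h. k' h / h < 0) (at_right 0)"
    using \<open>\<not> 0 \<le> c\<close> by (simp add: order_tendstoD(2))
  then obtain \<tau> where \<tau>: "0 < \<tau>" "\<And>h. 0 < h \<Longrightarrow> h < \<tau> \<Longrightarrow> k' h / h < 0"
    by (auto simp: eventually_at_right_field)
  define t where "t = min \<tau> d / 2"
  have t: "0 < t" "t < \<tau>" "t < d" using \<tau> d by (auto simp: t_def)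
  obtain z where z: "0 < z" "z < t" "k t - k 0 = t * k' z"
    using MVT2[of 0 t k k'] t dk by force
  have "k' z < 0" using \<tau>(2)[of z] z t by (simp add: divide_less_0_iff)
  then have "k t < k 0" using z t mult_pos_neg[of t "k' z"] by simp
  with min[of t] t show False by simp
qed

lemma local_min_grad_hessian:
  fixes D :: "'a::euclidean_space \<Rightarrow> real"
  assumes S: "open S" "x \<in> S" and min: "\<And>y. y \<in> S \<Longrightarrow> D x \<le> D y"
    and dD: "\<And>y. y \<in> S \<Longrightarrow> D differentiable (at y)"
    and H: "(grad D has_derivative H) (at x)"
  shows "grad D x = 0" and "0 \<le> H h \<bullet> h"
proof -
  have "eventually (\<lambda>y. D x \<le> D y) (at x)"
    using eventually_at_in_open'[OF S] by eventually_elim (use min in auto)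
  from has_derivative_local_min[OF has_derivative_grad[OF dD[OF S(2)]] this]
  have "grad D x \<bullet> grad D x = 0" by meson
  then show grad0: "grad D x = 0" by simp
  obtain e where e: "0 < e" "ball x e \<subseteq> S" using S open_contains_ball by blast
  define d where "d = e / (norm h + 1)"
  have d: "0 < d" using e by (simp add: d_def add_nonneg_pos)
  have line: "x + t *\<^sub>R h \<in> S" if "\<bar>t\<bar> < d" for t
  proof -
    have "\<bar>t\<bar> * norm h \<le> \<bar>t\<bar> * (norm h + 1)" by (simp add: mult_left_mono)
    also have "\<dots> < e" using that e by (simp add: d_def pos_less_divide_eq add_nonneg_pos)
    finally show ?thesis using e by (auto simp: dist_norm)
  qed
  have dline: "((\<lambda>t. x + t *\<^sub>R h) has_derivative (\<lambda>s. s *\<^sub>R h)) (at t)" for t :: real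
    by (auto intro!: derivative_eq_intros)
  have "((\<lambda>t. D (x + t *\<^sub>R h)) has_real_derivative grad D (x + t *\<^sub>R h) \<bullet> h) (at t)"
    if "\<bar>t\<bar> < d" for t
    using has_derivative_compose[OF dline has_derivative_grad[OF dD[OF line[OF that]]]]
    by (simp add: has_real_derivative_iff_has_vector_derivative has_vector_derivative_def)
  moreover have "((\<lambda>t. grad D (x + t *\<^sub>R h) \<bullet> h) has_real_derivative H h \<bullet> h) (at 0)"
  proof -
    have "((\<lambda>t. grad D (x + t *\<^sub>R h)) has_derivative (\<lambda>s. H (s *\<^sub>R h))) (at 0)"
      using has_derivative_compose[of _ _ 0, OF dline] H by simp
    then have "((\<lambda>t. grad D (x + t *\<^sub>R h) \<bullet> h) has_derivative (\<lambda>s. H (s *\<^sub>R h) \<bullet> h)) (at 0)"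
      by (rule has_derivative_inner_left)
    moreover have "linear H" using H has_derivative_linear by blast
    ultimately show ?thesis
      by (simp add: has_real_derivative_iff_has_vector_derivative has_vector_derivative_def
          linear_cmul mult.commute)
  qed
  ultimately show "0 \<le> H h \<bullet> h"
    by (intro second_derivative_nonneg_at_local_min[OF d, of "\<lambda>t. D (x + t *\<^sub>R h)"])
       (use min line grad0 in auto)
qed

lemma touching_from_below:
  fixes F W :: "'a::euclidean_space \<Rightarrow> real"
  assumes S: "open S" "x \<in> S"
    and le: "\<And>y. y \<in> S \<Longrightarrow> F y \<le> c * W y" and eq: "F x = c * W x"
    and dF: "\<And>y. y \<in> S \<Longrightarrow> F differentiable (at y)"
    and dW: "\<And>y. y \<in> S \<Longrightarrow> W differentiable (at y)"
    and HF: "(grad F has_derivative HF) (at x)" and HW: "(grad W has_derivative HW) (at x)"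
  shows "grad F x = c *\<^sub>R grad W x" and "HF h \<bullet> h \<le> c * (HW h \<bullet> h)"
proof -
  define D where "D y = c * W y - F y" for y
  have dD: "(D has_derivative (\<lambda>h. (c *\<^sub>R grad W y - grad F y) \<bullet> h)) (at y)" if "y \<in> S" for y
  proof -
    have "(D has_derivative (\<lambda>h. c * (grad W y \<bullet> h) - grad F y \<bullet> h)) (at y)"
      unfolding D_def using that dF dW
      by (intro has_derivative_diff has_derivative_mult_right has_derivative_grad) auto
    then show ?thesis by (simp add: inner_diff_left)
  qed
  have "((\<lambda>y. c *\<^sub>R grad W y - grad F y) has_derivative (\<lambda>k. c *\<^sub>R HW k - HF k)) (at x)"
    by (intro has_derivative_diff has_derivative_scaleR_right HW HF)
  then have HD: "(grad D has_derivative (\<lambda>k. c *\<^sub>R HW k - HF k)) (at x)"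
    by (rule has_derivative_transform_within_open[OF _ S]) (simp add: grad_eqI[OF dD])
  have min: "D x \<le> D y" if "y \<in> S" for y
    using le[OF that] eq by (simp add: D_def)
  have dD': "D differentiable (at y)" if "y \<in> S" for y
    using dD[OF that] by (auto simp: differentiable_def)
  show "grad F x = c *\<^sub>R grad W x"
    using local_min_grad_hessian(1)[OF S min dD' HD] grad_eqI[OF dD[OF S(2)]] by simp
  show "HF h \<bullet> h \<le> c * (HW h \<bullet> h)"
    using local_min_grad_hessian(2)[OF S min dD' HD, of h] by (simp add: inner_diff_left)
qed

lemma plap_le_touching:
  fixes F W :: "'a::euclidean_space \<Rightarrow> real"
  assumes S: "open S" "x \<in> S"
    and le: "\<And>y. y \<in> S \<Longrightarrow> F y \<le> c * W y" and eq: "F x = c * W x"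
    and dF: "\<And>y. y \<in> S \<Longrightarrow> F differentiable (at y)"
    and dW: "\<And>y. y \<in> S \<Longrightarrow> W differentiable (at y)"
    and HF: "(grad F has_derivative HF) (at x)" and HW: "(grad W has_derivative HW) (at x)"
    and p: "2 \<le> p" and c: "0 < c" and nz: "grad F x \<noteq> 0"
  shows "plap p F x \<le> c powr (p - 1) * plap p W x"
proof -
  have gF: "grad F x = c *\<^sub>R grad W x"
    by (rule touching_from_below(1)[OF S le eq dF dW HF HW])
  have hess: "HF h \<bullet> h \<le> c * (HW h \<bullet> h)" for h
    by (rule touching_from_below(2)[OF S le eq dF dW HF HW])
  have nzW: "grad W x \<noteq> 0" using nz gF by auto
  have "plap p F x = (c * norm (grad W x)) powr (p - 2) * plap_factor p HF (grad W x)"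
    using plap_eq_plap_factor[OF HF nz] plap_factor_scaleR[OF has_derivative_linear[OF HF]] c
    by (simp add: gF)
  also have "\<dots> \<le> (c * norm (grad W x)) powr (p - 2) * (c * plap_factor p HW (grad W x))"
    by (intro mult_left_mono plap_factor_mono[OF hess p]) simp
  also have "\<dots> = c powr (p - 1) * plap p W x"
    using plap_eq_plap_factor[OF HW nzW] powr_minus_two_mult_self[of c p] c
    by (simp add: powr_mult algebra_simps)
  finally show ?thesis .
qed

lemma annulus_comparison:
  fixes F w V :: "'a::euclidean_space \<Rightarrow> real" and a b :: real
  defines "K \<equiv> cball 0 b - ball 0 a" and "S \<equiv> ball 0 b - cball 0 a"
  assumes p: "2 \<le> p" and c: "0 < c"
    and cont: "continuous_on K F" "continuous_on K w" and w: "\<And>y. y \<in> K \<Longrightarrow> 0 < w y"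
    and boundary: "\<And>y. y \<in> K \<Longrightarrow> norm y = a \<or> norm y = b \<Longrightarrow> F y \<le> c * w y"
    and C2: "\<And>y. y \<in> S \<Longrightarrow> F differentiable (at y) \<and> grad F differentiable (at y)
                             \<and> w differentiable (at y) \<and> grad w differentiable (at y)"
    and super: "\<And>y. y \<in> S \<Longrightarrow> plap p w y \<le> - V y * ppow p (w y)"
    and strict: "\<And>y. y \<in> S \<Longrightarrow> c * w y < F y \<Longrightarrow>
                   - V y * ppow p (F y) < plap p F y \<and> grad F y \<noteq> 0"
    and y: "y \<in> K"
  shows "F y \<le> c * w y"
proof -
  have "compact K" unfolding K_def by (intro compact_diff compact_cball open_ball)
  moreover have "continuous_on K (\<lambda>y. F y / w y)"
    using cont w by (intro continuous_intros) (auto simp: less_le)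
  ultimately obtain z where z: "z \<in> K" and max: "\<And>y. y \<in> K \<Longrightarrow> F y / w y \<le> F z / w z"
    using continuous_attains_sup[of K] y by blast
  define T where "T = F z / w z"
  have wz: "0 < w z" using w z by blast
  have "T \<le> c"
  proof (rule ccontr)
    assume "\<not> T \<le> c"
    have FzT: "F z = T * w z" using wz by (simp add: T_def)
    with \<open>\<not> T \<le> c\<close> wz have big: "c * w z < F z" by simp
    then have "norm z \<noteq> a" "norm z \<noteq> b" using boundary[OF z] by auto
    then have zS: "z \<in> S" using z by (auto simp: K_def S_def)
    have SK: "S \<subseteq> K" by (auto simp: K_def S_def)
    have le: "F y \<le> T * w y" if "y \<in> S" for y
      using max[of y] w[of y] that SK by (auto simp: T_def pos_divide_le_eq)
    obtain HF HW
      where HF: "(grad F has_derivative HF) (at z)" and HW: "(grad w has_derivative HW) (at z)"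
      using C2[OF zS] by (auto simp: differentiable_def)
    have "open S" unfolding S_def by (intro open_Diff open_ball closed_cball)
    have "plap p F z \<le> T powr (p - 1) * plap p w z"
    proof (rule plap_le_touching[OF \<open>open S\<close> zS le FzT _ _ HF HW p])
      show "0 < T" using c \<open>\<not> T \<le> c\<close> by simp
      show "grad F z \<noteq> 0" using strict[OF zS big] by blast
    qed (use C2 in blast)+
    also have "\<dots> \<le> T powr (p - 1) * (- V z * ppow p (w z))"
      using super[OF zS] by (intro mult_left_mono) auto
    also have "\<dots> = - V z * ppow p (F z)"
      using c \<open>\<not> T \<le> c\<close> wz by (simp add: FzT ppow_pos powr_mult)
    finally show False using strict[OF zS big] by simp
  qed
  then have "F y / w y \<le> c" using max[OF y] by (simp add: T_def)
  then show ?thesis using w[OF y] by (simp add: pos_divide_le_eq)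
qed

section \<open>The perturbed difference\<close>

lemma has_derivative_diff_scaled_grad:
  fixes u v :: "'a::euclidean_space \<Rightarrow> real"
  assumes "u differentiable (at y)" "v differentiable (at y)"
  shows "((\<lambda>y. u y - \<epsilon> * v y) has_derivative (\<lambda>h. (grad u y - \<epsilon> *\<^sub>R grad v y) \<bullet> h)) (at y)"
proof -
  have "((\<lambda>y. u y - \<epsilon> * v y) has_derivative (\<lambda>h. grad u y \<bullet> h - \<epsilon> * (grad v y \<bullet> h))) (at y)"
    by (intro has_derivative_diff has_derivative_mult_right has_derivative_grad assms)
  then show ?thesis by (simp add: inner_diff_left)
qed

lemma has_derivative_quadratic_perturbation_grad:
  fixes f :: "'a::euclidean_space \<Rightarrow> real"
  assumes "f differentiable (at y)"
  shows "((\<lambda>y. f y + \<delta> + \<eta> * (f y)\<^sup>2) has_derivative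
           (\<lambda>h. ((1 + 2 * \<eta> * f y) *\<^sub>R grad f y) \<bullet> h)) (at y)"
  using has_derivative_grad[OF assms]
  by (auto intro!: derivative_eq_intros simp: power2_eq_square algebra_simps)

lemma has_derivative_grad_diff_scaled:
  fixes u v :: "'a::euclidean_space \<Rightarrow> real"
  assumes S: "open S" "x \<in> S"
    and du: "\<And>y. y \<in> S \<Longrightarrow> u differentiable (at y)"
    and dv: "\<And>y. y \<in> S \<Longrightarrow> v differentiable (at y)"
    and Hu: "(grad u has_derivative Hu) (at x)" and Hv: "(grad v has_derivative Hv) (at x)"
  shows "(grad (\<lambda>y. u y - \<epsilon> * v y) has_derivative (\<lambda>k. Hu k - \<epsilon> *\<^sub>R Hv k)) (at x)"
proof -
  have "((\<lambda>y. grad u y - \<epsilon> *\<^sub>R grad v y) has_derivative (\<lambda>k. Hu k - \<epsilon> *\<^sub>R Hv k)) (at x)"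
    by (intro has_derivative_diff has_derivative_scaleR_right Hu Hv)
  then show ?thesis
    by (rule has_derivative_transform_within_open[OF _ S])
       (simp add: grad_eqI[OF has_derivative_diff_scaled_grad[OF du dv]])
qed

lemma has_derivative_grad_quadratic_perturbation:
  fixes f :: "'a::euclidean_space \<Rightarrow> real"
  assumes S: "open S" "x \<in> S" and df: "\<And>y. y \<in> S \<Longrightarrow> f differentiable (at y)"
    and H: "(grad f has_derivative H) (at x)"
  shows "(grad (\<lambda>y. f y + \<delta> + \<eta> * (f y)\<^sup>2) has_derivative
           (\<lambda>k. (1 + 2 * \<eta> * f x) *\<^sub>R H k + (2 * \<eta> * (grad f x \<bullet> k)) *\<^sub>R grad f x)) (at x)"
proof -
  have "((\<lambda>y. 1 + 2 * \<eta> * f y) has_derivative (\<lambda>k. 2 * \<eta> * (grad f x \<bullet> k))) (at x)"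
    using has_derivative_grad[OF df[OF S(2)]] by (auto intro!: derivative_eq_intros)
  from has_derivative_scaleR[OF this H]
  have "((\<lambda>y. (1 + 2 * \<eta> * f y) *\<^sub>R grad f y) has_derivative
      (\<lambda>k. (1 + 2 * \<eta> * f x) *\<^sub>R H k + (2 * \<eta> * (grad f x \<bullet> k)) *\<^sub>R grad f x)) (at x)"
    by simp
  then show ?thesis
    by (rule has_derivative_transform_within_open[OF _ S])
       (simp add: grad_eqI[OF has_derivative_quadratic_perturbation_grad[OF df]])
qed

lemma plap_quadratic_perturbation:
  fixes f :: "'a::euclidean_space \<Rightarrow> real" and e :: 'a
  assumes S: "open S" "x \<in> S" and df: "\<And>y. y \<in> S \<Longrightarrow> f differentiable (at y)"
    and H: "(grad f has_derivative H) (at x)"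
    and e: "norm e = 1" and gf: "grad f x = c *\<^sub>R e" and c: "c \<noteq> 0"
    and g: "0 < 1 + 2 * \<eta> * f x"
  shows "plap p (\<lambda>y. f y + \<delta> + \<eta> * (f y)\<^sup>2) x = ((1 + 2 * \<eta> * f x) * \<bar>c\<bar>) powr (p - 2) *
           ((1 + 2 * \<eta> * f x) * plap_factor p H e + (p - 1) * 2 * \<eta> * c\<^sup>2)"
proof -
  define g where "g = 1 + 2 * \<eta> * f x"
  define HF where "HF = (\<lambda>k. g *\<^sub>R H k + (2 * \<eta> * (grad f x \<bullet> k)) *\<^sub>R grad f x)"
  have HF: "(grad (\<lambda>y. f y + \<delta> + \<eta> * (f y)\<^sup>2) has_derivative HF) (at x)"
    unfolding HF_def g_def by (rule has_derivative_grad_quadratic_perturbation[OF S df H])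
  have "grad (\<lambda>y. f y + \<delta> + \<eta> * (f y)\<^sup>2) x = (g * c) *\<^sub>R e"
    using grad_eqI[OF has_derivative_quadratic_perturbation_grad[OF df[OF S(2)]]]
    by (simp add: gf g_def)
  from plap_eq_plap_factor_direction[OF HF this _ e] c g
  have "plap p (\<lambda>y. f y + \<delta> + \<eta> * (f y)\<^sup>2) x = (g * \<bar>c\<bar>) powr (p - 2) * plap_factor p HF e"
    by (simp add: g_def abs_mult)
  moreover have "(\<Sum>b\<in>Basis. HF b \<bullet> b) = g * (\<Sum>b\<in>Basis. H b \<bullet> b) + 2 * \<eta> * c\<^sup>2"
  proof -
    have "(\<Sum>b\<in>Basis. (grad f x \<bullet> b) * (grad f x \<bullet> b)) = grad f x \<bullet> grad f x"
      by (rule euclidean_inner[symmetric])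
    also have "\<dots> = c\<^sup>2" using e by (simp add: gf power2_eq_square dot_square_norm)
    finally have sq: "(\<Sum>b\<in>Basis. (grad f x \<bullet> b) * (grad f x \<bullet> b)) = c\<^sup>2" .
    have "HF b \<bullet> b = g * (H b \<bullet> b) + (2 * \<eta>) * ((grad f x \<bullet> b) * (grad f x \<bullet> b))" for b
      by (simp add: HF_def inner_add_left)
    then show ?thesis by (simp add: sum.distrib flip: sum_distrib_left sq)
  qed
  moreover have "e \<bullet> HF e = g * (e \<bullet> H e) + 2 * \<eta> * c\<^sup>2"
    using e by (simp add: HF_def gf inner_add_right power2_eq_square dot_square_norm algebra_simps)
  ultimately show ?thesis using e by (simp add: plap_factor_unit g_def algebra_simps)
qed

lemma plap_perturbed_difference:
  fixes u v :: "'a::euclidean_space \<Rightarrow> real" and x e :: 'a and \<epsilon> \<delta> \<eta> :: real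
  defines "F \<equiv> \<lambda>y. (u y - \<epsilon> * v y) + \<delta> + \<eta> * (u y - \<epsilon> * v y)\<^sup>2"
    and "g \<equiv> 1 + 2 * \<eta> * (u x - \<epsilon> * v x)"
  assumes S: "open S" "x \<in> S"
    and diff_u: "\<And>y. y \<in> S \<Longrightarrow> u differentiable (at y)"
    and diff_v: "\<And>y. y \<in> S \<Longrightarrow> v differentiable (at y)"
    and Hu: "(grad u has_derivative Hu) (at x)" and Hv: "(grad v has_derivative Hv) (at x)"
    and e: "norm e = 1" and gu: "grad u x = du *\<^sub>R e" and gv: "grad v x = dv *\<^sub>R e"
    and c: "du - \<epsilon> * dv \<noteq> 0" and g: "0 < g"
  shows "grad F x = (g * (du - \<epsilon> * dv)) *\<^sub>R e"
    and "plap p F x = (g * \<bar>du - \<epsilon> * dv\<bar>) powr (p - 2) *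
           (g * (plap_factor p Hu e - \<epsilon> * plap_factor p Hv e) + (p - 1) * 2 * \<eta> * (du - \<epsilon> * dv)\<^sup>2)"
proof -
  have df: "((\<lambda>y. u y - \<epsilon> * v y) has_derivative (\<lambda>h. (grad u y - \<epsilon> *\<^sub>R grad v y) \<bullet> h)) (at y)"
    if "y \<in> S" for y
    using diff_u diff_v that by (intro has_derivative_diff_scaled_grad)
  have gf: "grad (\<lambda>y. u y - \<epsilon> * v y) x = (du - \<epsilon> * dv) *\<^sub>R e"
    by (simp add: grad_eqI[OF df[OF S(2)]] gu gv algebra_simps)
  show "grad F x = (g * (du - \<epsilon> * dv)) *\<^sub>R e"
    using has_derivative_quadratic_perturbation_grad[OF differentiableI[OF df[OF S(2)]]]
    by (simp add: F_def g_def gf grad_eqI)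
  show "plap p F x = (g * \<bar>du - \<epsilon> * dv\<bar>) powr (p - 2) *
      (g * (plap_factor p Hu e - \<epsilon> * plap_factor p Hv e) + (p - 1) * 2 * \<eta> * (du - \<epsilon> * dv)\<^sup>2)"
    using plap_quadratic_perturbation[OF S differentiableI[OF df]
        has_derivative_grad_diff_scaled[OF S diff_u diff_v Hu Hv] e gf c g[unfolded g_def]]
    by (simp add: F_def g_def plap_factor_diff_scaled)
qed

lemma perturbed_difference_strict_subsolution:
  fixes u v :: "'a::euclidean_space \<Rightarrow> real" and e :: 'a and \<epsilon> \<delta> \<eta> :: real
  defines "F \<equiv> \<lambda>y. (u y - \<epsilon> * v y) + \<delta> + \<eta> * (u y - \<epsilon> * v y)\<^sup>2"
  assumes p: "2 \<le> p" and S: "open S" "x \<in> S"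
    and diff_u: "\<And>y. y \<in> S \<Longrightarrow> u differentiable (at y)"
    and diff_v: "\<And>y. y \<in> S \<Longrightarrow> v differentiable (at y)"
    and Hu: "(grad u has_derivative Hu) (at x)" and Hv: "(grad v has_derivative Hv) (at x)"
    and e: "norm e = 1" and gu: "grad u x = du *\<^sub>R e" and gv: "grad v x = dv *\<^sub>R e"
    and neg: "du < 0" "dv < 0" and pos: "0 < u x" "0 < v x" "0 < \<epsilon>" "0 < \<eta>" and V: "0 \<le> V"
    and f: "\<epsilon> * v x < u x" and ratio: "du * v x \<le> dv * u x"
    and sub: "- plap p u x - V * ppow p (u x) \<le> 0"
    and super: "0 \<le> - plap p v x - V * ppow p (v x)"
    and \<delta>: "\<eta> * (u x - \<epsilon> * v x)\<^sup>2 \<le> \<delta>"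
  shows "- V * ppow p (F x) < plap p F x" and "grad F x \<noteq> 0"
proof -
  define f where "f = u x - \<epsilon> * v x"
  define s where "s = - du - \<epsilon> * - dv"
  \<comment> \<open>\<open>u/v\<close> nonincreasing and \<open>u > \<epsilon> v\<close>: the radial derivative of \<open>u - \<epsilon> v\<close> is negative\<close>
  have "dv * u x < dv * (\<epsilon> * v x)" using neg(2) f by (simp add: mult_strict_left_mono_neg)
  then have "du * v x < (\<epsilon> * dv) * v x" using ratio by (simp add: algebra_simps)
  then have s: "0 < s" "du - \<epsilon> * dv = - s" using pos(2) by (simp_all add: s_def)
  have f_pos: "0 < f" using f by (simp add: f_def)
  have g: "0 < 1 + 2 * \<eta> * f" using f_pos pos(4) by (simp add: add_pos_pos)
  note F = plap_perturbed_difference[where \<delta> = \<delta>,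
      OF S diff_u diff_v Hu Hv e gu gv _ g[unfolded f_def], folded F_def f_def]
  have "- V * f powr (p - 1) \<le> (plap_factor p Hu e - \<epsilon> * plap_factor p Hv e) * s powr (p - 2)"
    unfolding f_def s_def
  proof (rule radial_difference_subsolution_ineq[OF p V pos(3)])
    show "- V * u x powr (p - 1) \<le> plap_factor p Hu e * (- du) powr (p - 2)"
      using sub pos(1) plap_eq_plap_factor_direction[OF Hu gu _ e] neg
      by (simp add: ppow_pos algebra_simps)
    show "plap_factor p Hv e * (- dv) powr (p - 2) \<le> - V * v x powr (p - 1)"
      using super pos(2) plap_eq_plap_factor_direction[OF Hv gv _ e] neg
      by (simp add: ppow_pos algebra_simps)
  qed (use neg pos f s s_def in auto)
  from quadratic_perturbation_strict_ineq[OF p V pos(4) f_pos s(1) \<delta>[folded f_def] this]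
  have "- V * (f + \<delta> + \<eta> * f\<^sup>2) powr (p - 1) < plap p F x"
    using F(2)[of p] s by simp
  moreover have "0 \<le> \<eta> * f\<^sup>2" using pos(4) by simp
  then have "0 < f + \<delta> + \<eta> * f\<^sup>2" using f_pos \<delta> by (simp add: f_def)
  ultimately show "- V * ppow p (F x) < plap p F x" by (simp add: F_def f_def ppow_pos)
  show "grad F x \<noteq> 0" using F(1) g s e by auto
qed

section \<open>Annuli and radial functions\<close>

lemma C2_on_differentiable:
  assumes "C2_on S f" "x \<in> S"
  shows "f differentiable (at x)" and "grad f differentiable (at x)"
  using assms by (auto simp: C2_on_def C2_open_def)

lemma C2_on_continuous_on: "C2_on S f \<Longrightarrow> continuous_on S f"
  by (auto intro!: continuous_at_imp_continuous_on differentiable_imp_continuous_within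
      C2_on_differentiable)

lemma open_annulus_open: "open (annulus_open r0 R0)"
  unfolding annulus_open_def by (intro open_Collect_conj open_Collect_less continuous_intros)

lemma annulus_open_subset_co: "annulus_open r0 R0 \<subseteq> annulus_co r0 R0"
  by (auto simp: annulus_open_def annulus_co_def)

lemma shell_subset_annulus_co:
  assumes "r0 \<le> a" "ereal b < R0"
  shows "cball 0 b - ball 0 a \<subseteq> annulus_co r0 R0"
  using assms by (auto simp: annulus_co_def intro: le_less_trans[of _ "ereal b"])

lemma open_shell_subset_annulus_open:
  assumes "r0 \<le> a" "ereal b < R0"
  shows "ball 0 b - cball 0 a \<subseteq> annulus_open r0 R0"
  using assms by (auto simp: annulus_open_def intro: less_trans[of _ "ereal b"])

lemma compact_le_const_mult:
  fixes u w :: "'a::topological_space \<Rightarrow> real"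
  assumes K: "compact K" and cont: "continuous_on K u" "continuous_on K w"
    and w: "\<And>y. y \<in> K \<Longrightarrow> 0 < w y"
  obtains C where "0 < C" "\<And>y. y \<in> K \<Longrightarrow> u y \<le> C * w y"
proof (cases "K = {}")
  case False
  have "continuous_on K (\<lambda>y. u y / w y)"
    using cont w by (intro continuous_intros) (auto simp: less_le)
  then obtain z where z: "\<And>y. y \<in> K \<Longrightarrow> u y / w y \<le> u z / w z"
    using continuous_attains_sup[OF K False] by blast
  have "u y \<le> max 1 (u z / w z) * w y" if "y \<in> K" for y
  proof -
    have "u y / w y \<le> max 1 (u z / w z)" using z[OF that] by (simp add: le_max_iff_disj)
    then show ?thesis using w[OF that] by (simp add: pos_divide_le_eq)
  qed
  then show ?thesis using that[of "max 1 (u z / w z)"] by auto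
qed (use that[of 1] in auto)

lemma compact_small_quadratic_coefficient:
  fixes f :: "'a::topological_space \<Rightarrow> real"
  assumes "compact K" "continuous_on K f" "0 < \<delta>"
  obtains \<eta> where "0 < \<eta>" "\<And>y. y \<in> K \<Longrightarrow> \<eta> * (f y)\<^sup>2 \<le> \<delta>"
proof -
  have "bounded (f ` K)" using assms by (intro compact_imp_bounded compact_continuous_image)
  then obtain M where M: "\<And>y. y \<in> K \<Longrightarrow> \<bar>f y\<bar> \<le> M" by (auto simp: bounded_real)
  have M1: "0 < M\<^sup>2 + 1" using zero_le_power2[of M] by linarith
  have "\<delta> / (M\<^sup>2 + 1) * (f y)\<^sup>2 \<le> \<delta>" if "y \<in> K" for y
  proof -
    have "(f y)\<^sup>2 \<le> M\<^sup>2 + 1" using power_mono[OF M[OF that], of 2] by simp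
    then have "\<delta> * (f y)\<^sup>2 \<le> \<delta> * (M\<^sup>2 + 1)" using assms(3) by (intro mult_left_mono) auto
    then show ?thesis using M1 by (simp add: pos_divide_le_eq)
  qed
  with that[of "\<delta> / (M\<^sup>2 + 1)"] assms(3) M1 show ?thesis by simp
qed

lemma grad_radial:
  fixes u :: "'a::euclidean_space \<Rightarrow> real"
  assumes x: "x \<noteq> 0" and S: "open S" "x \<in> S" and u: "\<And>y. y \<in> S \<Longrightarrow> u y = \<phi> (norm y)"
    and d: "(\<phi> has_real_derivative d) (at (norm x))"
  shows "grad u x = d *\<^sub>R sgn x"
proof (rule grad_eqI)
  have "((\<lambda>y. \<phi> (norm y)) has_derivative (\<lambda>h. (h \<bullet> sgn x) * d)) (at x)"
    using DERIV_compose_FDERIV[OF d has_derivative_norm[OF x]] .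
  then have "(u has_derivative (\<lambda>h. (h \<bullet> sgn x) * d)) (at x)"
    by (rule has_derivative_transform_within_open[OF _ S]) (simp add: u)
  then show "(u has_derivative (\<lambda>h. (d *\<^sub>R sgn x) \<bullet> h)) (at x)"
    by (simp add: inner_commute mult.commute)
qed

lemma at_within_radii:
  assumes "r0 < r" "ereal r < R0"
  shows "at r within radii r0 R0 = at r"
proof -
  obtain z where z: "ereal r < ereal z" "ereal z < R0" using ereal_dense2[OF assms(2)] by blast
  have "{r0<..<z} \<subseteq> radii r0 R0"
    using z(2) by (auto simp: radii_def intro: less_trans[of _ "ereal z"])
  then have "{r0<..<z} \<subseteq> interior (radii r0 R0)" by (rule interior_maximal) simp
  then have "r \<in> interior (radii r0 R0)" using assms z by auto
  then show ?thesis by (rule at_within_interior)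
qed

lemma radial_sdec_grad:
  fixes u :: "'a::euclidean_space \<Rightarrow> real"
  assumes u: "radial_sdec r0 R0 u \<phi>" and r0: "0 \<le> r0" and x: "x \<in> annulus_open r0 R0"
  obtains d where "d < 0" "(\<phi> has_real_derivative d) (at (norm x))" "grad u x = d *\<^sub>R sgn x"
proof -
  have r: "r0 < norm x" "ereal (norm x) < R0" using x by (auto simp: annulus_open_def)
  then have "norm x \<in> radii r0 R0" by (simp add: radii_def)
  then obtain d where d: "d < 0" "(\<phi> has_real_derivative d) (at (norm x))"
    using u at_within_radii[OF r] by (auto simp: radial_sdec_def)
  moreover have "grad u x = d *\<^sub>R sgn x"
    using u annulus_open_subset_co r r0
    by (intro grad_radial[OF _ open_annulus_open x _ d(2)]) (auto simp: radial_sdec_def)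
  ultimately show ?thesis using that by blast
qed

lemma ratio_antimono_right_deriv_le:
  fixes f g :: "real \<Rightarrow> real"
  assumes df: "(f has_real_derivative f') (at r)" and dg: "(g has_real_derivative g') (at r)"
    and g: "0 < g r" and e: "0 < e"
    and antimono: "\<And>t. r < t \<Longrightarrow> t < r + e \<Longrightarrow> f t / g t \<le> f r / g r"
  shows "f' * g r \<le> f r * g'"
proof -
  have "((\<lambda>t. f t / g t) has_real_derivative (f' * g r - f r * g') / (g r * g r)) (at r)"
    using DERIV_divide[OF df dg] g by simp
  then have lim: "((\<lambda>h. (f (r + h) / g (r + h) - f r / g r) / h)
      \<longlongrightarrow> (f' * g r - f r * g') / (g r * g r)) (at_right 0)"
    by (simp add: DERIV_def filterlim_at_split)
  have "eventually (\<lambda>h. h \<in> {0<..<e}) (at_right (0::real))"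
    by (rule eventually_at_right_real[OF e])
  then have "eventually (\<lambda>h. (f (r + h) / g (r + h) - f r / g r) / h \<le> 0) (at_right 0)"
    by eventually_elim (use antimono in \<open>auto simp: divide_nonpos_pos\<close>)
  from tendsto_upperbound[OF lim this] have "(f' * g r - f r * g') / (g r * g r) \<le> 0" by simp
  moreover have "0 < g r * g r" using g by simp
  ultimately have "f' * g r - f r * g' \<le> 0" by (simp add: pos_divide_le_eq)
  then show ?thesis by simp
qed

section \<open>The comparison argument\<close>

locale radial_comparison =
  fixes p r0 :: real and R0 :: ereal and V u v w :: "'a::euclidean_space \<Rightarrow> real"
    and \<phi>u \<phi>v :: "real \<Rightarrow> real"
  assumes p: "2 \<le> p" and r0: "0 \<le> r0"
    and V_nonneg: "\<And>x. x \<in> annulus_open r0 R0 \<Longrightarrow> 0 \<le> V x"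
    and u_sub: "subsol p r0 R0 V u" and u_pos: "\<And>x. x \<in> annulus_co r0 R0 \<Longrightarrow> 0 < u x"
    and u_radial: "radial_sdec r0 R0 u \<phi>u"
    and v_super: "supersol p r0 R0 V v" and v_pos: "\<And>x. x \<in> annulus_co r0 R0 \<Longrightarrow> 0 < v x"
    and v_radial: "radial_sdec r0 R0 v \<phi>v"
    and u_smaller_v: "mono_smaller r0 R0 \<phi>u \<phi>v"
    and w_super: "supersol p r0 R0 V w" and w_pos: "\<And>x. x \<in> annulus_co r0 R0 \<Longrightarrow> 0 < w x"
begin

lemma C2_on_uvw:
  "C2_on (annulus_co r0 R0) u" "C2_on (annulus_co r0 R0) v" "C2_on (annulus_co r0 R0) w"
  using u_sub v_super w_super by (auto simp: subsol_def supersol_def)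

lemma differentiable_uv:
  assumes "y \<in> annulus_co r0 R0"
  shows "u differentiable (at y)" "v differentiable (at y)"
    and "grad u differentiable (at y)" "grad v differentiable (at y)"
  using C2_on_differentiable[OF C2_on_uvw(1) assms] C2_on_differentiable[OF C2_on_uvw(2) assms]
  by auto

lemma radial_profiles:
  assumes "x \<in> annulus_co r0 R0"
  shows "u x = \<phi>u (norm x)" and "v x = \<phi>v (norm x)"
  using assms u_radial v_radial by (auto simp: radial_sdec_def)

lemma difference_negative_on_far_sphere:
  assumes \<epsilon>: "0 < \<epsilon>" and r: "r0 \<le> r" "ereal r < R0"
  obtains \<rho> where "r < \<rho>" "ereal \<rho> < R0" "\<And>y. norm y = \<rho> \<Longrightarrow> u y < \<epsilon> * v y"
proof -
  have "\<phi>u \<in> o[to_R0 R0](\<phi>v)" using u_smaller_v by (simp add: mono_smaller_def)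
  then have small: "eventually (\<lambda>s. norm (\<phi>u s) \<le> \<epsilon> / 2 * norm (\<phi>v s)) (to_R0 R0)"
    using \<epsilon> by (intro landau_o.smallD) auto
  have far: "eventually (\<lambda>s. r < s \<and> ereal s < R0) (to_R0 R0)"
  proof (cases "R0 = \<infinity>")
    case True
    then show ?thesis by (simp add: to_R0_def eventually_gt_at_top)
  next
    case False
    then obtain R where "R0 = ereal R" using r(2) by (cases R0) auto
    then show ?thesis using eventually_at_left_real[of r R] r(2) by (simp add: to_R0_def)
  qed
  have "to_R0 R0 \<noteq> bot" by (cases "R0 = \<infinity>") (auto simp: to_R0_def)
  then obtain \<rho> where \<rho>: "norm (\<phi>u \<rho>) \<le> \<epsilon> / 2 * norm (\<phi>v \<rho>)" "r < \<rho>" "ereal \<rho> < R0"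
    using eventually_happens'[OF _ eventually_conj[OF small far]] by blast
  have "u y < \<epsilon> * v y" if "norm y = \<rho>" for y
  proof -
    have y: "y \<in> annulus_co r0 R0" using that r \<rho> by (simp add: annulus_co_def)
    then have "u y \<le> \<epsilon> / 2 * v y"
      using \<rho>(1) radial_profiles[OF y] u_pos[OF y] v_pos[OF y] that by simp
    moreover have "0 < \<epsilon> * v y" using \<epsilon> v_pos[OF y] by simp
    ultimately show ?thesis by linarith
  qed
  with \<rho> that show ?thesis by blast
qed

lemma perturbed_difference_strict_at:
  fixes \<epsilon> \<delta> \<eta> :: real
  defines "F \<equiv> \<lambda>y. (u y - \<epsilon> * v y) + \<delta> + \<eta> * (u y - \<epsilon> * v y)\<^sup>2"
  assumes antimono: "\<And>s t. s \<in> radii r0 R0 \<Longrightarrow> t \<in> radii r0 R0 \<Longrightarrow> r1 \<le> s \<Longrightarrow> s \<le> t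
                       \<Longrightarrow> \<phi>u t / \<phi>v t \<le> \<phi>u s / \<phi>v s"
    and x: "x \<in> annulus_open r0 R0" "r1 \<le> norm x" and pos: "0 < \<epsilon>" "0 < \<eta>"
    and f: "\<epsilon> * v x < u x" and \<delta>: "\<eta> * (u x - \<epsilon> * v x)\<^sup>2 \<le> \<delta>"
  shows "- V x * ppow p (F x) < plap p F x \<and> grad F x \<noteq> 0"
proof -
  have x_co: "x \<in> annulus_co r0 R0" using x annulus_open_subset_co by blast
  have r: "r0 < norm x" "ereal (norm x) < R0" using x by (auto simp: annulus_open_def)
  obtain du where du: "du < 0" "(\<phi>u has_real_derivative du) (at (norm x))" "grad u x = du *\<^sub>R sgn x"
    using radial_sdec_grad[OF u_radial r0 x(1)] .
  obtain dv where dv: "dv < 0" "(\<phi>v has_real_derivative dv) (at (norm x))" "grad v x = dv *\<^sub>R sgn x"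
    using radial_sdec_grad[OF v_radial r0 x(1)] .
  obtain z where z: "ereal (norm x) < ereal z" "ereal z < R0" using ereal_dense2[OF r(2)] by blast
  have "du * \<phi>v (norm x) \<le> \<phi>u (norm x) * dv"
  proof (rule ratio_antimono_right_deriv_le[OF du(2) dv(2)])
    show "0 < \<phi>v (norm x)" using v_pos[OF x_co] radial_profiles(2)[OF x_co] by simp
    show "0 < z - norm x" using z by simp
    show "\<phi>u t / \<phi>v t \<le> \<phi>u (norm x) / \<phi>v (norm x)"
      if "norm x < t" "t < norm x + (z - norm x)" for t
    proof -
      have "ereal t < R0" using that z(2) less_trans[of "ereal t" "ereal z" R0] by simp
      then show ?thesis using antimono[of "norm x" t] that r x(2) by (simp add: radii_def)
    qed
  qed
  then have ratio: "du * v x \<le> dv * u x" using radial_profiles[OF x_co] by (simp add: mult.commute)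
  have "x \<noteq> 0" using r r0 by auto
  then have e: "norm (sgn x) = 1" by (simp add: norm_sgn)
  have diff: "u differentiable (at y)" "v differentiable (at y)" if "y \<in> annulus_open r0 R0" for y
    using differentiable_uv annulus_open_subset_co that by blast+
  obtain Hu Hv
    where Hu: "(grad u has_derivative Hu) (at x)" and Hv: "(grad v has_derivative Hv) (at x)"
    using differentiable_uv(3,4)[OF x_co] by (auto simp: differentiable_def)
  have "- plap p u x - V x * ppow p (u x) \<le> 0" "0 \<le> - plap p v x - V x * ppow p (v x)"
    using u_sub v_super x(1) by (auto simp: subsol_def supersol_def)
  from perturbed_difference_strict_subsolution[OF p open_annulus_open x(1) diff Hu Hv e du(3) dv(3)
      du(1) dv(1) u_pos[OF x_co] v_pos[OF x_co] pos V_nonneg[OF x(1)] f ratio this \<delta>]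
  show ?thesis unfolding F_def by blast
qed

lemma perturbed_difference_C2:
  fixes \<epsilon> \<delta> \<eta> :: real
  defines "F \<equiv> \<lambda>y. (u y - \<epsilon> * v y) + \<delta> + \<eta> * (u y - \<epsilon> * v y)\<^sup>2"
  assumes y: "y \<in> annulus_open r0 R0"
  shows "F differentiable (at y) \<and> grad F differentiable (at y)"
proof -
  have diff: "u differentiable (at z)" "v differentiable (at z)" if "z \<in> annulus_open r0 R0" for z
    using differentiable_uv annulus_open_subset_co that by blast+
  obtain Hu Hv where "(grad u has_derivative Hu) (at y)" "(grad v has_derivative Hv) (at y)"
    using differentiable_uv(3,4)[OF subsetD[OF annulus_open_subset_co y]]
    by (auto simp: differentiable_def)
  note Hf = has_derivative_grad_diff_scaled[OF open_annulus_open y diff this, of \<epsilon>]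
  have df: "(\<lambda>y. u y - \<epsilon> * v y) differentiable (at z)" if "z \<in> annulus_open r0 R0" for z
    using has_derivative_diff_scaled_grad[OF diff[OF that]] by (rule differentiableI)
  show ?thesis unfolding F_def
    using differentiableI[OF has_derivative_quadratic_perturbation_grad[OF df[OF y],
          where \<delta> = \<delta> and \<eta> = \<eta>]]
      differentiableI[OF has_derivative_grad_quadratic_perturbation[OF open_annulus_open y df Hf,
          where \<delta> = \<delta> and \<eta> = \<eta>]]
    by blast
qed

lemma perturbed_difference_le_on_shell:
  fixes \<epsilon> \<delta> \<eta> C \<rho> r1 :: real
  defines "F \<equiv> \<lambda>y. (u y - \<epsilon> * v y) + \<delta> + \<eta> * (u y - \<epsilon> * v y)\<^sup>2"
    and "K \<equiv> cball (0::'a) \<rho> - ball 0 r1"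
  assumes antimono: "\<And>s t. s \<in> radii r0 R0 \<Longrightarrow> t \<in> radii r0 R0 \<Longrightarrow> r1 \<le> s \<Longrightarrow> s \<le> t
                       \<Longrightarrow> \<phi>u t / \<phi>v t \<le> \<phi>u s / \<phi>v s"
    and r1: "r0 \<le> r1" and \<rho>: "ereal \<rho> < R0"
    and inner: "\<And>y. norm y = r1 \<Longrightarrow> u y \<le> C * w y"
    and far: "\<And>y. norm y = \<rho> \<Longrightarrow> u y < \<epsilon> * v y"
    and pos: "0 < C" "0 < \<epsilon>" "0 < \<eta>"
    and \<delta>: "\<And>y. y \<in> K \<Longrightarrow> 2 * \<delta> \<le> C * w y"
    and \<eta>: "\<And>y. y \<in> K \<Longrightarrow> \<eta> * (u y - \<epsilon> * v y)\<^sup>2 \<le> \<delta>"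
    and x: "x \<in> K"
  shows "F x \<le> 2 * C * w x"
proof (rule annulus_comparison[where a = r1 and b = \<rho> and p = p and V = V, folded K_def])
  have K_co: "K \<subseteq> annulus_co r0 R0"
    unfolding K_def using r1 \<rho> by (rule shell_subset_annulus_co)
  have S_open: "ball 0 \<rho> - cball 0 r1 \<subseteq> annulus_open r0 R0"
    using r1 \<rho> by (rule open_shell_subset_annulus_open)
  have S_K: "ball 0 \<rho> - cball 0 r1 \<subseteq> K" by (auto simp: K_def)
  have F_le: "F y \<le> u y - \<epsilon> * v y + C * w y" if "y \<in> K" for y
    using \<eta>[OF that] \<delta>[OF that] by (simp add: F_def)
  have pos_K: "0 < v y" "0 < C * w y" if "y \<in> K" for y
    using v_pos w_pos K_co that pos(1) by auto
  show "continuous_on K F" "continuous_on K w"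
    unfolding F_def using K_co C2_on_uvw
    by (auto intro!: continuous_intros intro: continuous_on_subset C2_on_continuous_on)
  show "F y \<le> 2 * C * w y" if y: "y \<in> K" "norm y = r1 \<or> norm y = \<rho>" for y
  proof -
    have "u y \<le> C * w y \<or> u y < \<epsilon> * v y" using y(2) inner far by blast
    moreover have "0 < \<epsilon> * v y" using pos(2) pos_K(1)[OF y(1)] by simp
    ultimately show ?thesis using F_le[OF y(1)] pos_K(2)[OF y(1)] by linarith
  qed
  show "- V y * ppow p (F y) < plap p F y \<and> grad F y \<noteq> 0"
    if y: "y \<in> ball 0 \<rho> - cball 0 r1" "2 * C * w y < F y" for y
  proof -
    have "C * w y < u y - \<epsilon> * v y" using F_le[of y] S_K y by auto
    then have "\<epsilon> * v y < u y" using pos_K(2)[of y] S_K y(1) by auto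
    then show ?thesis unfolding F_def
      using y(1) S_open S_K pos \<eta>
      by (intro perturbed_difference_strict_at[OF antimono]) auto
  qed
  show "F differentiable (at y) \<and> grad F differentiable (at y)
      \<and> w differentiable (at y) \<and> grad w differentiable (at y)"
    if "y \<in> ball 0 \<rho> - cball 0 r1" for y
    using perturbed_difference_C2 C2_on_differentiable[OF C2_on_uvw(3)] S_open
      annulus_open_subset_co that
    unfolding F_def by blast
  show "plap p w y \<le> - V y * ppow p (w y)" if "y \<in> ball 0 \<rho> - cball 0 r1" for y
    using w_super S_open that by (force simp: supersol_def)
  show "0 < w y" if "y \<in> K" for y using w_pos K_co that by blast
qed (use p pos(1) x in auto)

lemma difference_le_beyond_inner_sphere:
  assumes r1: "r1 \<in> radii r0 R0"
    and antimono: "\<And>s t. s \<in> radii r0 R0 \<Longrightarrow> t \<in> radii r0 R0 \<Longrightarrow> r1 \<le> s \<Longrightarrow> s \<le> t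
                     \<Longrightarrow> \<phi>u t / \<phi>v t \<le> \<phi>u s / \<phi>v s"
    and C: "0 < C" and inner: "\<And>y. norm y = r1 \<Longrightarrow> u y \<le> C * w y"
    and \<epsilon>: "0 < \<epsilon>" and x: "x \<in> annulus_co r0 R0" "r1 \<le> norm x"
  shows "u x - \<epsilon> * v x \<le> 2 * C * w x"
proof -
  have r1': "r0 \<le> r1" using r1 by (simp add: radii_def)
  obtain \<rho> where \<rho>: "norm x < \<rho>" "ereal \<rho> < R0" and far: "\<And>y. norm y = \<rho> \<Longrightarrow> u y < \<epsilon> * v y"
    using difference_negative_on_far_sphere[OF \<epsilon>, of "norm x"] x(1) by (auto simp: annulus_co_def)
  define K where "K = cball (0::'a) \<rho> - ball 0 r1"
  have K_co: "K \<subseteq> annulus_co r0 R0"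
    unfolding K_def using r1' \<rho>(2) by (rule shell_subset_annulus_co)
  have K: "compact K" unfolding K_def by (intro compact_diff compact_cball open_ball)
  have xK: "x \<in> K" using x \<rho> by (simp add: K_def)
  have cont: "continuous_on K u" "continuous_on K v" "continuous_on K w"
    using C2_on_uvw K_co by (auto intro: continuous_on_subset C2_on_continuous_on)
  obtain z where z: "z \<in> K" "\<And>y. y \<in> K \<Longrightarrow> w z \<le> w y"
    using continuous_attains_inf[OF K _ cont(3)] xK by blast
  have wz: "0 < w z" using w_pos z K_co by auto
  have "continuous_on K (\<lambda>y. u y - \<epsilon> * v y)" using cont by (intro continuous_intros)
  moreover have "0 < C * w z / 2" using C wz by simp
  ultimately obtain \<eta> where \<eta>: "0 < \<eta>" "\<And>y. y \<in> K \<Longrightarrow> \<eta> * (u y - \<epsilon> * v y)\<^sup>2 \<le> C * w z / 2"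
    by (rule compact_small_quadratic_coefficient[OF K]) blast
  have \<delta>: "2 * (C * w z / 2) \<le> C * w y" if "y \<in> K" for y using z(2)[OF that] C by simp
  have "u x - \<epsilon> * v x + C * w z / 2 + \<eta> * (u x - \<epsilon> * v x)\<^sup>2 \<le> 2 * C * w x"
    using perturbed_difference_le_on_shell[where \<delta> = "C * w z / 2", OF antimono r1' \<rho>(2) inner far
        C \<epsilon> \<eta>(1) \<delta>[unfolded K_def] \<eta>(2)[unfolded K_def] xK[unfolded K_def]] .
  moreover have "0 \<le> \<eta> * (u x - \<epsilon> * v x)\<^sup>2" "0 < C * w z" using \<eta>(1) C wz by simp_all
  ultimately show ?thesis by linarith
qed

lemma u_le_const_mult_w: "\<exists>C>0. \<forall>x\<in>annulus_co r0 R0. u x \<le> C * w x"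
proof -
  obtain r1 where r1: "r1 \<in> radii r0 R0"
    and antimono: "\<And>s t. s \<in> radii r0 R0 \<Longrightarrow> t \<in> radii r0 R0 \<Longrightarrow> r1 \<le> s \<Longrightarrow> s \<le> t
                     \<Longrightarrow> \<phi>u t / \<phi>v t \<le> \<phi>u s / \<phi>v s"
    using u_smaller_v unfolding mono_smaller_def by blast
  define K0 where "K0 = cball (0::'a) r1 - ball 0 r0"
  have K0: "K0 \<subseteq> annulus_co r0 R0"
    unfolding K0_def using r1 by (intro shell_subset_annulus_co) (auto simp: radii_def)
  obtain C where C: "0 < C" "\<And>y. y \<in> K0 \<Longrightarrow> u y \<le> C * w y"
  proof (rule compact_le_const_mult[of K0 u w])
    show "compact K0" unfolding K0_def by (intro compact_diff compact_cball open_ball)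
  qed (use K0 C2_on_uvw w_pos in \<open>auto intro: continuous_on_subset C2_on_continuous_on\<close>)
  have "u x \<le> 2 * C * w x" if x: "x \<in> annulus_co r0 R0" for x
  proof (cases "norm x \<le> r1")
    case True
    then have "u x \<le> C * w x" using x C(2) by (auto simp: K0_def annulus_co_def)
    then show ?thesis using mult_pos_pos[OF C(1) w_pos[OF x]] by linarith
  next
    case False
    have inner: "u y \<le> C * w y" if "norm y = r1" for y
      using that r1 C(2) by (auto simp: K0_def radii_def)
    show ?thesis
    proof (rule field_le_epsilon)
      fix e :: real assume "0 < e"
      with v_pos[OF x] have "u x - e / v x * v x \<le> 2 * C * w x"
        using False by (intro difference_le_beyond_inner_sphere[OF r1 antimono C(1) inner _ x]) auto
      then show "u x \<le> 2 * C * w x + e" using v_pos[OF x] by simp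
    qed
  qed
  then show ?thesis using C(1) by (intro exI[of _ "2 * C"]) auto
qed

end

theorem lemma3p2:
  fixes V u v w :: "'a::euclidean_space \<Rightarrow> real"
    and \<phi>u \<phi>v :: "real \<Rightarrow> real"
    and p r0 :: real and R0 :: ereal
  assumes "DIM('a) \<ge> 2" and "p \<ge> 2" and "0 < r0" and "ereal r0 < R0"
    and "continuous_on (annulus_open r0 R0) V"
    and "\<forall>x\<in>annulus_open r0 R0. V x \<ge> 0"
    and "cond_star p r0 R0 V"
    and "subsol p r0 R0 V u" and "\<forall>x\<in>annulus_co r0 R0. u x > 0"
    and "radial_sdec r0 R0 u \<phi>u"
    and "supersol p r0 R0 V v" and "\<forall>x\<in>annulus_co r0 R0. v x > 0"
    and "radial_sdec r0 R0 v \<phi>v"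
    and "mono_smaller r0 R0 \<phi>u \<phi>v"
    and "supersol p r0 R0 V w" and "\<forall>x\<in>annulus_co r0 R0. w x > 0"
  shows "\<exists>C>0. \<forall>x\<in>annulus_co r0 R0. u x \<le> C * w x"
proof -
  interpret radial_comparison p r0 R0 V u v w \<phi>u \<phi>v
    using assms by unfold_locales auto
  show ?thesis by (rule u_le_const_mult_w)
qed

end
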